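(* Let $f:\mathbb{F}_q^n\to\mathbb{F}_q^n$ be a monomial dynamical system. Then $f$ is a fixed point system if and only if both $T(f):\mathbb{F}_2^n\to\mathbb{F}_2^n$ and $L(f):(\mathbb{Z}/(q-1))^n\to(\mathbb{Z}/(q-1))^n$ are fixed point systems.
   Context: A monomial system $f=(f_1,\dots,f_n):\mathbb{F}_q^n\to\mathbb{F}_q^n$ has $f_i=x_1^{a_{i1}}\cdots x_n^{a_{in}}$ with exponent matrix $A=(a_{ij})$, $a_{ij}\in\mathbb{Z}_{\ge0}$. $T(f)=(g_1,\dots,g_n)$ is the Boolean monomial system with $g_i=x_1^{v_{i1}}\cdots x_n^{v_{in}}$, where $v_{ij}=1$ if $a_{ij}\ne0$ and $v_{ij}=0$ otherwise. $L(f)$ is the linear map $\mathbf s\mapsto A\mathbf s$ over the ring $\mathbb{Z}/(q-1)$. A map $h:X\to X$ on a finite set is a fixed point system if every periodic point is fixed: $h^k(x)=x$ for some $k\ge1$ implies $h(x)=x$. *)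

theory Defs
  imports "HOL-Analysis.Analysis" "HOL-Library.Z2"
begin

definition fixed_point_system_on :: "'x set \<Rightarrow> ('x \<Rightarrow> 'x) \<Rightarrow> bool" where
  "fixed_point_system_on X h \<longleftrightarrow>
     (\<forall>x\<in>X. (\<exists>k\<ge>1. (h ^^ k) x = x) \<longrightarrow> h x = x)"

text \<open>Monomial system with exponent matrix A: f_i(x) = prod_j x_j^(A i j) (with 0^0 = 1).\<close>
definition monomial_system :: "('n::finite \<Rightarrow> 'n \<Rightarrow> nat) \<Rightarrow> 'a::comm_ring_1 ^ 'n \<Rightarrow> 'a ^ 'n" where
  "monomial_system A x = (\<chi> i. \<Prod>j\<in>UNIV. (x $ j) ^ (A i j))"

text \<open>T(f): Boolean monomial system over F_2 (type bit) with the support matrix of A.\<close>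
definition T_sys :: "('n::finite \<Rightarrow> 'n \<Rightarrow> nat) \<Rightarrow> bit ^ 'n \<Rightarrow> bit ^ 'n" where
  "T_sys A = monomial_system (\<lambda>i j. if A i j \<noteq> 0 then 1 else 0)"

text \<open>(Z/m)^n represented by the vectors with entries in {0..<m}.\<close>
definition Zmod_vecs :: "nat \<Rightarrow> (nat ^ 'n::finite) set" where
  "Zmod_vecs m = {s. \<forall>i. s $ i < m}"

definition L_sys :: "nat \<Rightarrow> ('n::finite \<Rightarrow> 'n \<Rightarrow> nat) \<Rightarrow> nat ^ 'n \<Rightarrow> nat ^ 'n" where
  "L_sys m A s = (\<chi> i. (\<Sum>j\<in>UNIV. A i j * s $ j) mod m)"

end

(*
  Split a point of F_q^n into its zero pattern, a point of F_2^n, and its nonzero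
  entries. The zero pattern of f(x) is T(f) applied to the zero pattern of x, and on the
  0/1 vectors, a copy of F_2^n inside F_q^n, f acts as T(f). On the torus of vectors with
  nonzero entries, a generator g of the cyclic group of units of F_q turns s into the
  vector g^s and so conjugates L(f) to f. Hence T(f) and L(f) are subsystems of f, which
  gives one direction.
  Conversely, let x be periodic for f. Its zero pattern is periodic, hence fixed, for
  T(f), so all iterates of x have the same support S, and on S they agree with the
  iterates of the torus point y obtained from x by replacing its zeros by 1. The orbit of
  y reaches a periodic torus point, which is fixed because L(f) is a fixed point system.
  So some iterate of x is fixed, and a periodic point whose orbit contains a fixed point
  is itself fixed.
*)
theory Submission
  imports Defs "HOL-Algebra.Multiplicative_Group" "HOL-Algebra.Algebraic_Closure_Type"
begin

section \<open>Fixed point systems and semiconjugacies\<close>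

lemma funpow_semiconj_on:
  assumes "k ` U \<subseteq> U" "\<And>x. x \<in> U \<Longrightarrow> h (\<sigma> x) = \<sigma> (k x)" "x \<in> U"
  shows "(h ^^ n) (\<sigma> x) = \<sigma> ((k ^^ n) x)"
proof (induction n)
  case (Suc n)
  have "(k ^^ n) x \<in> U"
    using assms(1,3) by (induction n) auto
  with Suc show ?case
    using assms(2) by simp
qed simp

lemma fixed_point_system_on_subset:
  "U \<subseteq> V \<Longrightarrow> fixed_point_system_on V h \<Longrightarrow> fixed_point_system_on U h"
  unfolding fixed_point_system_on_def by blast

lemma fixed_point_system_on_embedding:
  assumes "inj_on \<sigma> U" "\<sigma> ` U \<subseteq> V" "k ` U \<subseteq> U" "\<And>x. x \<in> U \<Longrightarrow> h (\<sigma> x) = \<sigma> (k x)"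
    and "fixed_point_system_on V h"
  shows "fixed_point_system_on U k"
  unfolding fixed_point_system_on_def
proof (intro ballI impI)
  fix x assume "x \<in> U" "\<exists>n\<ge>1. (k ^^ n) x = x"
  then obtain n where "n \<ge> 1" "(k ^^ n) x = x"
    by blast
  then have "(h ^^ n) (\<sigma> x) = \<sigma> x"
    using funpow_semiconj_on[of k U h \<sigma> x n] assms(3,4) \<open>x \<in> U\<close> by simp
  then have "h (\<sigma> x) = \<sigma> x"
    using assms(2,5) \<open>x \<in> U\<close> \<open>n \<ge> 1\<close> unfolding fixed_point_system_on_def by blast
  then have "\<sigma> (k x) = \<sigma> x"
    using assms(4) \<open>x \<in> U\<close> by simp
  then show "k x = x"
    using assms(1,3) \<open>x \<in> U\<close> by (auto dest: inj_onD)
qed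

lemma fixed_point_system_on_conj_iff:
  assumes "bij_betw \<sigma> U V" "k ` U \<subseteq> U" "\<And>x. x \<in> U \<Longrightarrow> h (\<sigma> x) = \<sigma> (k x)"
  shows "fixed_point_system_on V h \<longleftrightarrow> fixed_point_system_on U k"
proof
  show "fixed_point_system_on V h \<Longrightarrow> fixed_point_system_on U k"
    using assms by (intro fixed_point_system_on_embedding[of \<sigma> U V k h])
      (auto simp: bij_betw_def)
next
  let ?\<tau> = "inv_into U \<sigma>"
  have \<tau>: "bij_betw ?\<tau> V U"
    using assms(1) by (rule bij_betw_inv_into)
  have "h y \<in> V \<and> k (?\<tau> y) = ?\<tau> (h y)" if "y \<in> V" for y
  proof -
    obtain x where "x \<in> U" "y = \<sigma> x"
      using assms(1) \<open>y \<in> V\<close> by (auto simp: bij_betw_def)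
    moreover have "k x \<in> U"
      using assms(2) \<open>x \<in> U\<close> by blast
    ultimately show ?thesis
      using assms bij_betw_imp_inj_on by (fastforce simp: bij_betw_def inv_into_f_f)
  qed
  then show "fixed_point_system_on U k \<Longrightarrow> fixed_point_system_on V h"
    using \<tau> by (intro fixed_point_system_on_embedding[of ?\<tau> V U h k])
      (auto simp: bij_betw_def)
qed

lemma finite_orbit_repeats:
  fixes h :: "'a::finite \<Rightarrow> 'a"
  obtains a b where "a < b" "(h ^^ a) x = (h ^^ b) x"
proof -
  have "\<not> inj (\<lambda>n. (h ^^ n) x)"
    using finite_imageD[of "\<lambda>n. (h ^^ n) x" UNIV] by auto
  then obtain a b where "a \<noteq> b" "(h ^^ a) x = (h ^^ b) x"
    unfolding inj_def by blast
  then show ?thesis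
    using that by (metis linorder_neqE_nat)
qed

lemma periodic_point_fixed_if_iterate_fixed:
  assumes "k \<ge> 1" "(h ^^ k) x = x" "h ((h ^^ a) x) = (h ^^ a) x"
  shows "h x = x"
proof -
  have stays_fixed: "(h ^^ n) ((h ^^ a) x) = (h ^^ a) x" for n
    using assms(3) by (induction n) simp_all
  have "x = (h ^^ (k * a)) x"
    using funpow_mod_eq[where f=h and n=k and m="k * a"] assms(2) by simp
  also have "\<dots> = (h ^^ (k * a - a + a)) x"
    using assms(1) by simp
  also have "\<dots> = (h ^^ (k * a - a)) ((h ^^ a) x)"
    by (simp only: funpow_add comp_apply)
  also have "\<dots> = (h ^^ a) x"
    by (rule stays_fixed)
  finally show ?thesis
    using assms(3) by simp
qed

lemma fixed_point_system_on_orbit_reaches_fixed_point: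
  fixes h :: "'a::finite \<Rightarrow> 'a"
  assumes "fixed_point_system_on U h" "h ` U \<subseteq> U" "y \<in> U"
  obtains a where "h ((h ^^ a) y) = (h ^^ a) y"
proof -
  obtain a b where "a < b" "(h ^^ a) y = (h ^^ b) y"
    by (rule finite_orbit_repeats)
  have "(h ^^ (b - a)) ((h ^^ a) y) = (h ^^ (b - a + a)) y"
    by (simp only: funpow_add comp_apply)
  also have "\<dots> = (h ^^ a) y"
    using \<open>a < b\<close> \<open>(h ^^ a) y = (h ^^ b) y\<close> by simp
  finally have "(h ^^ (b - a)) ((h ^^ a) y) = (h ^^ a) y" .
  moreover have "(h ^^ a) y \<in> U"
    using assms(2,3) by (induction a) auto
  moreover have "b - a \<ge> 1"
    using \<open>a < b\<close> by simp
  ultimately show ?thesis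
    using assms(1) that unfolding fixed_point_system_on_def by blast
qed

section \<open>Generators of finite fields\<close>

lemma power_mod_exponent:
  fixes g :: "'a::monoid_mult"
  assumes "g ^ m = 1"
  shows "g ^ (n mod m) = g ^ n"
proof -
  have "g ^ n = g ^ (m * (n div m) + n mod m)"
    by simp
  also have "\<dots> = (g ^ m) ^ (n div m) * g ^ (n mod m)"
    by (simp only: power_add power_mult)
  finally have "g ^ n = (g ^ m) ^ (n div m) * g ^ (n mod m)" .
  with assms show ?thesis
    by simp
qed

lemma finite_field_card_ge_2: "CARD('a::{field,finite}) \<ge> 2"
proof -
  have "card {0 :: 'a, 1} \<le> CARD('a)"
    by (rule card_mono) auto
  then show ?thesis
    by simp
qed

lemma finite_field_has_generator:
  "\<exists>g :: 'a::{field,finite}. g ^ (CARD('a) - 1) = 1 \<and> (\<forall>y. y \<noteq> 0 \<longrightarrow> (\<exists>i. y = g ^ i))"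
proof -
  define K where "K = (ring_of_type_algebra :: 'a ring)"
  interpret K: field K
    unfolding K_def by rule
  have carrier_K: "carrier K = UNIV" "carrier (Multiplicative_Group.mult_of K) = UNIV - {0}"
    by (simp_all add: K_def ring_of_type_algebra_def)
  have pow_K: "x [^]\<^bsub>K\<^esub> n = x ^ n" for x :: 'a and n :: nat
    by (induction n) (simp_all add: K_def ring_of_type_algebra_def mult.commute)
  obtain g where g: "g \<in> carrier (Multiplicative_Group.mult_of K)"
    and gen: "carrier (Multiplicative_Group.mult_of K) = {g [^]\<^bsub>K\<^esub> i | i::nat. i \<in> UNIV}"
    using K.finite_field_mult_group_has_gen carrier_K(1) by auto
  have "order (Multiplicative_Group.mult_of K) = CARD('a) - 1"
    using K.order_mult_of carrier_K(1) by (simp add: order_def)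
  then have "g ^ (CARD('a) - 1) = 1"
    using group.pow_order_eq_1[OF K.field_mult_group g] pow_K
    by (simp add: Multiplicative_Group.mult_of_simps) (simp add: K_def ring_of_type_algebra_def)
  moreover have "\<exists>i. y = g ^ i" if "y \<noteq> 0" for y
    using gen that pow_K carrier_K(2) by auto
  ultimately show ?thesis
    by blast
qed

lemma finite_field_generator:
  "\<exists>g :: 'a::{field,finite}.
     g ^ (CARD('a) - 1) = 1 \<and> bij_betw (\<lambda>i. g ^ i) {..<CARD('a) - 1} (UNIV - {0})"
proof -
  let ?m = "CARD('a) - 1"
  obtain g :: 'a where g: "g ^ ?m = 1" and gen: "\<And>y. y \<noteq> 0 \<Longrightarrow> \<exists>i. y = g ^ i"
    using finite_field_has_generator by blast
  have "?m > 0"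
    using finite_field_card_ge_2[where 'a='a] by simp
  have "g \<noteq> 0"
    using g \<open>?m > 0\<close> by (cases "g = 0") (simp_all add: power_0_left)
  have image: "(\<lambda>i. g ^ i) ` {..<?m} = UNIV - {0}"
  proof
    show "(\<lambda>i. g ^ i) ` {..<?m} \<subseteq> UNIV - {0}"
      using \<open>g \<noteq> 0\<close> by auto
    show "UNIV - {0} \<subseteq> (\<lambda>i. g ^ i) ` {..<?m}"
    proof
      fix y :: 'a assume "y \<in> UNIV - {0}"
      then obtain i where "y = g ^ i"
        using gen by blast
      then have "y = g ^ (i mod ?m)"
        using power_mod_exponent[OF g] by simp
      then show "y \<in> (\<lambda>i. g ^ i) ` {..<?m}"
        using \<open>?m > 0\<close> by auto
    qed
  qed
  moreover have "card (UNIV - {0 :: 'a}) = ?m"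
    by (simp add: card_Diff_singleton)
  ultimately have "inj_on (\<lambda>i. g ^ i) {..<?m}"
    by (intro eq_card_imp_inj_on) simp_all
  with image g show ?thesis
    unfolding bij_betw_def by blast
qed

section \<open>Zero patterns and the Boolean system\<close>

(* With target type bit this is the support map to F_2^n; with source type bit it is the
   inclusion of F_2^n as the 0/1 vectors. *)
definition zero_pattern :: "'a::zero ^ 'n \<Rightarrow> 'b::zero_neq_one ^ 'n" where
  "zero_pattern x = (\<chi> j. of_bool (x $ j \<noteq> 0))"

lemma monomial_system_nth: "monomial_system A x $ i = (\<Prod>j\<in>UNIV. x $ j ^ A i j)"
  by (simp add: monomial_system_def)

lemma monomial_system_nth_eq_0_iff:
  fixes x :: "'a::idom ^ 'n::finite"
  shows "monomial_system A x $ i = 0 \<longleftrightarrow> (\<exists>j. A i j \<noteq> 0 \<and> x $ j = 0)"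
  by (auto simp: monomial_system_nth prod_zero_iff power_eq_0_iff)

lemma T_sys_eq_monomial_system: "T_sys A = monomial_system A"
proof -
  have "b ^ (if a \<noteq> 0 then 1 else 0) = b ^ a" for b :: bit and a :: nat
    by simp
  then show ?thesis
    unfolding T_sys_def monomial_system_def by (simp only:)
qed

lemma zero_pattern_monomial_system:
  fixes x :: "'a::idom ^ 'n::finite"
  shows "zero_pattern (monomial_system A x) = (monomial_system A (zero_pattern x) :: 'b::idom ^ 'n)"
proof -
  have "zero_pattern (monomial_system A x) $ i = (monomial_system A (zero_pattern x) :: 'b ^ 'n) $ i"
    for i
  proof (cases "\<exists>j. A i j \<noteq> 0 \<and> x $ j = 0")
    case True
    then have "(monomial_system A (zero_pattern x) :: 'b ^ 'n) $ i = 0"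
      by (auto simp: monomial_system_nth_eq_0_iff zero_pattern_def)
    moreover have "monomial_system A x $ i = 0"
      using True monomial_system_nth_eq_0_iff by blast
    ultimately show ?thesis
      by (simp add: zero_pattern_def)
  next
    case False
    have "(zero_pattern x :: 'b ^ 'n) $ j ^ A i j = 1" for j
    proof (cases "A i j = 0")
      case False
      with \<open>\<nexists>j. A i j \<noteq> 0 \<and> x $ j = 0\<close> have "x $ j \<noteq> 0"
        by blast
      then show ?thesis
        by (simp add: zero_pattern_def)
    qed simp
    then have "(monomial_system A (zero_pattern x) :: 'b ^ 'n) $ i = 1"
      by (simp add: monomial_system_nth)
    moreover have "monomial_system A x $ i \<noteq> 0"
      using False monomial_system_nth_eq_0_iff by blast
    ultimately show ?thesis
      by (simp add: zero_pattern_def)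
  qed
  then show ?thesis
    by (simp add: vec_eq_iff)
qed

lemma inj_zero_pattern_bit: "inj (zero_pattern :: bit ^ 'n \<Rightarrow> 'a::zero_neq_one ^ 'n)"
  by (rule inj_on_inverseI[where g = zero_pattern]) (auto simp: zero_pattern_def vec_eq_iff)

section \<open>The torus and the linear system\<close>

definition torus :: "('a::zero ^ 'n) set" where
  "torus = {y. \<forall>j. y $ j \<noteq> 0}"

definition power_vec :: "'a::monoid_mult \<Rightarrow> nat ^ 'n \<Rightarrow> 'a ^ 'n" where
  "power_vec g s = (\<chi> j. g ^ (s $ j))"

lemma monomial_system_torus: "monomial_system A ` torus \<subseteq> (torus :: ('a::idom ^ 'n::finite) set)"
  by (auto simp: torus_def monomial_system_nth_eq_0_iff)

lemma L_sys_Zmod_vecs: "0 < m \<Longrightarrow> L_sys m A ` Zmod_vecs m \<subseteq> Zmod_vecs m"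
  by (auto simp: Zmod_vecs_def L_sys_def)

lemma monomial_system_power_vec:
  fixes g :: "'a::comm_ring_1"
  assumes "g ^ m = 1"
  shows "monomial_system A (power_vec g s) = power_vec g (L_sys m A s)"
proof -
  have "monomial_system A (power_vec g s) $ i = power_vec g (L_sys m A s) $ i" for i
  proof -
    have "monomial_system A (power_vec g s) $ i = (\<Prod>j\<in>UNIV. g ^ (A i j * s $ j))"
      by (simp add: monomial_system_nth power_vec_def power_mult[symmetric] mult.commute)
    also have "\<dots> = g ^ (\<Sum>j\<in>UNIV. A i j * s $ j)"
      by (simp add: power_sum)
    also have "\<dots> = g ^ ((\<Sum>j\<in>UNIV. A i j * s $ j) mod m)"
      using power_mod_exponent[OF assms] by simp
    finally show ?thesis
      by (simp add: power_vec_def L_sys_def)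
  qed
  then show ?thesis
    by (simp add: vec_eq_iff)
qed

lemma bij_betw_power_vec:
  fixes g :: "'a::comm_ring_1"
  assumes "bij_betw (\<lambda>i. g ^ i) {..<m} (UNIV - {0})"
  shows "bij_betw (power_vec g) (Zmod_vecs m) (torus :: ('a ^ 'n::finite) set)"
  unfolding bij_betw_def
proof
  have inj: "inj_on (\<lambda>i. g ^ i) {..<m}"
    using assms by (rule bij_betw_imp_inj_on)
  show "inj_on (power_vec g :: nat ^ 'n \<Rightarrow> 'a ^ 'n) (Zmod_vecs m)"
  proof (rule inj_onI)
    fix s t :: "nat ^ 'n"
    assume "s \<in> Zmod_vecs m" "t \<in> Zmod_vecs m" "power_vec g s = power_vec g t"
    then have "s $ j = t $ j" for j
      using inj_onD[OF inj, of "s $ j" "t $ j"] by (simp add: power_vec_def Zmod_vecs_def vec_eq_iff)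
    then show "s = t"
      by (simp add: vec_eq_iff)
  qed
  show "power_vec g ` Zmod_vecs m = (torus :: ('a ^ 'n) set)"
  proof
    show "power_vec g ` Zmod_vecs m \<subseteq> (torus :: ('a ^ 'n) set)"
      using bij_betw_apply[OF assms] by (auto simp: power_vec_def Zmod_vecs_def torus_def)
    show "(torus :: ('a ^ 'n) set) \<subseteq> power_vec g ` Zmod_vecs m"
    proof
      fix y :: "'a ^ 'n" assume "y \<in> torus"
      define s where "s = (\<chi> j. inv_into {..<m} (\<lambda>i. g ^ i) (y $ j))"
      have "y $ j \<in> (\<lambda>i. g ^ i) ` {..<m}" for j
        using \<open>y \<in> torus\<close> assms by (simp add: torus_def bij_betw_def)
      then have "s $ j < m" "g ^ (s $ j) = y $ j" for j
        using inv_into_into[of "y $ j" "\<lambda>i. g ^ i" "{..<m}"] f_inv_into_f[of "y $ j" "\<lambda>i. g ^ i" "{..<m}"]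
        by (simp_all add: s_def)
      then have "s \<in> Zmod_vecs m" "power_vec g s = y"
        by (simp_all add: Zmod_vecs_def power_vec_def vec_eq_iff)
      then show "y \<in> power_vec g ` Zmod_vecs m"
        by blast
    qed
  qed
qed

lemma fixed_point_system_on_torus_iff:
  "fixed_point_system_on torus (monomial_system A :: 'a::{field,finite} ^ 'n::finite \<Rightarrow> 'a ^ 'n)
   \<longleftrightarrow> fixed_point_system_on (Zmod_vecs (CARD('a) - 1)) (L_sys (CARD('a) - 1) A)"
proof -
  obtain g :: 'a where g: "g ^ (CARD('a) - 1) = 1"
    "bij_betw (\<lambda>i. g ^ i) {..<CARD('a) - 1} (UNIV - {0})"
    using finite_field_generator by blast
  have "CARD('a) - 1 > 0"
    using finite_field_card_ge_2[where 'a='a] by simp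
  moreover have "bij_betw (power_vec g) (Zmod_vecs (CARD('a) - 1)) (torus :: ('a ^ 'n) set)"
    using g(2) by (rule bij_betw_power_vec)
  ultimately show ?thesis
    by (intro fixed_point_system_on_conj_iff L_sys_Zmod_vecs)
      (assumption | rule monomial_system_power_vec[OF g(1)])+
qed

section \<open>Periodic points off the torus\<close>

lemma monomial_system_nth_eq_if_agree:
  fixes x y :: "'a::idom ^ 'n::finite"
  assumes "\<And>j. x $ j \<noteq> 0 \<Longrightarrow> y $ j = x $ j" "monomial_system A x $ i \<noteq> 0"
  shows "monomial_system A y $ i = monomial_system A x $ i"
proof -
  have "y $ j ^ A i j = x $ j ^ A i j" for j
  proof (cases "A i j = 0")
    case False
    then have "x $ j \<noteq> 0"
      using assms(2) monomial_system_nth_eq_0_iff by blast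
    then show ?thesis
      using assms(1) by simp
  qed simp
  then show ?thesis
    by (simp add: monomial_system_nth)
qed

lemma funpow_monomial_system_nth_eq_0_iff:
  fixes x :: "'a::idom ^ 'n::finite"
  assumes "T_sys A (zero_pattern x) = zero_pattern x"
  shows "(monomial_system A ^^ r) x $ j = 0 \<longleftrightarrow> x $ j = 0"
proof -
  have "zero_pattern ((monomial_system A ^^ r) x) = (zero_pattern x :: bit ^ 'n)"
    using assms by (induction r) (simp_all add: zero_pattern_monomial_system T_sys_eq_monomial_system)
  then have "(zero_pattern ((monomial_system A ^^ r) x) :: bit ^ 'n) $ j = zero_pattern x $ j"
    by simp
  then have "((monomial_system A ^^ r) x $ j \<noteq> 0) = (x $ j \<noteq> 0)"
    unfolding zero_pattern_def vec_lambda_beta of_bool_eq_iff .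
  then show ?thesis
    by blast
qed

lemma funpow_monomial_system_agree:
  fixes x y :: "'a::idom ^ 'n::finite"
  assumes "T_sys A (zero_pattern x) = zero_pattern x" "\<And>j. x $ j \<noteq> 0 \<Longrightarrow> y $ j = x $ j"
    and "x $ j \<noteq> 0"
  shows "(monomial_system A ^^ r) y $ j = (monomial_system A ^^ r) x $ j"
  using assms(3)
proof (induction r arbitrary: j)
  case 0
  then show ?case
    using assms(2) by simp
next
  case (Suc r)
  let ?f = "monomial_system A"
  have "(?f ^^ r) y $ l = (?f ^^ r) x $ l" if "(?f ^^ r) x $ l \<noteq> 0" for l
    using Suc.IH that funpow_monomial_system_nth_eq_0_iff[OF assms(1), of r l] by blast
  moreover have "?f ((?f ^^ r) x) $ j \<noteq> 0"
    using Suc.prems funpow_monomial_system_nth_eq_0_iff[OF assms(1), of "Suc r" j] by simp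
  ultimately have "?f ((?f ^^ r) y) $ j = ?f ((?f ^^ r) x) $ j"
    by (rule monomial_system_nth_eq_if_agree)
  then show ?case
    by simp
qed

lemma fixed_point_system_on_UNIV_if_T_sys_and_torus:
  fixes A :: "'n::finite \<Rightarrow> 'n \<Rightarrow> nat"
  assumes T: "fixed_point_system_on UNIV (T_sys A)"
    and torus: "fixed_point_system_on torus (monomial_system A :: 'a::{idom,finite} ^ 'n \<Rightarrow> 'a ^ 'n)"
  shows "fixed_point_system_on UNIV (monomial_system A :: 'a ^ 'n \<Rightarrow> 'a ^ 'n)"
  unfolding fixed_point_system_on_def
proof (intro ballI impI)
  let ?f = "monomial_system A :: 'a ^ 'n \<Rightarrow> 'a ^ 'n"
  fix x :: "'a ^ 'n"
  assume "\<exists>k\<ge>1. (?f ^^ k) x = x"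
  then obtain k where k: "k \<ge> 1" "(?f ^^ k) x = x"
    by blast
  have "(T_sys A ^^ k) (zero_pattern x) = zero_pattern x"
    using funpow_semiconj_on[of ?f UNIV "T_sys A" zero_pattern x k] k(2)
    by (simp add: zero_pattern_monomial_system T_sys_eq_monomial_system)
  then have pattern_fixed: "T_sys A (zero_pattern x) = zero_pattern x"
    using T k(1) unfolding fixed_point_system_on_def by blast
  define y where "y = (\<chi> j. if x $ j = 0 then 1 else x $ j)"
  have "y \<in> torus" "\<And>j. x $ j \<noteq> 0 \<Longrightarrow> y $ j = x $ j"
    by (simp_all add: y_def torus_def)
  then have agree: "(?f ^^ r) y $ j = (?f ^^ r) x $ j" if "x $ j \<noteq> 0" for r j
    using pattern_fixed that by (blast intro: funpow_monomial_system_agree)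
  obtain a where y_fixed: "?f ((?f ^^ a) y) = (?f ^^ a) y"
    using torus monomial_system_torus \<open>y \<in> torus\<close>
    by (rule fixed_point_system_on_orbit_reaches_fixed_point)
  have "?f ((?f ^^ a) x) $ j = (?f ^^ a) x $ j" for j
  proof (cases "x $ j = 0")
    case True
    then show ?thesis
      using funpow_monomial_system_nth_eq_0_iff[OF pattern_fixed, of "Suc a" j]
        funpow_monomial_system_nth_eq_0_iff[OF pattern_fixed, of a j] by simp
  next
    case False
    then show ?thesis
      using agree[OF False, of "Suc a"] agree[OF False, of a] y_fixed by simp
  qed
  then have "?f ((?f ^^ a) x) = (?f ^^ a) x"
    by (simp add: vec_eq_iff)
  with k show "?f x = x"
    by (rule periodic_point_fixed_if_iterate_fixed)
qed

theorem mainTheorem6: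
  fixes A :: "'n::finite \<Rightarrow> 'n \<Rightarrow> nat"
  shows "fixed_point_system_on UNIV (monomial_system A :: ('a::{field,finite}) ^ 'n \<Rightarrow> 'a ^ 'n)
     \<longleftrightarrow> fixed_point_system_on UNIV (T_sys A)
       \<and> fixed_point_system_on (Zmod_vecs (CARD('a) - 1)) (L_sys (CARD('a) - 1) A)"
proof
  assume f: "fixed_point_system_on UNIV (monomial_system A :: 'a ^ 'n \<Rightarrow> 'a ^ 'n)"
  have "fixed_point_system_on UNIV (T_sys A)"
    by (rule fixed_point_system_on_embedding[where \<sigma> = zero_pattern, OF inj_zero_pattern_bit _ _ _ f])
      (simp_all add: zero_pattern_monomial_system T_sys_eq_monomial_system)
  moreover have "fixed_point_system_on torus (monomial_system A :: 'a ^ 'n \<Rightarrow> 'a ^ 'n)"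
    using subset_UNIV f by (rule fixed_point_system_on_subset)
  then have "fixed_point_system_on (Zmod_vecs (CARD('a) - 1)) (L_sys (CARD('a) - 1) A)"
    by (simp add: fixed_point_system_on_torus_iff)
  ultimately show "fixed_point_system_on UNIV (T_sys A)
       \<and> fixed_point_system_on (Zmod_vecs (CARD('a) - 1)) (L_sys (CARD('a) - 1) A)"
    by blast
next
  assume "fixed_point_system_on UNIV (T_sys A)
       \<and> fixed_point_system_on (Zmod_vecs (CARD('a) - 1)) (L_sys (CARD('a) - 1) A)"
  then show "fixed_point_system_on UNIV (monomial_system A :: 'a ^ 'n \<Rightarrow> 'a ^ 'n)"
    by (intro fixed_point_system_on_UNIV_if_T_sys_and_torus)
      (simp_all add: fixed_point_system_on_torus_iff)
qed

end
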